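(* Let $V$ be an Archimedean linear lattice and let $(\mathcal{R}, S, V)$ be a $V$-complete vector $S$-metric space. Let $p, q, k:\mathcal{R}\to\mathcal{R}$ be maps satisfying: (i) for all $\xi,\gamma\in\mathcal{R}$, $$S(p\xi,p\xi,q\gamma)\preceq h_1 S(k\xi,k\xi,k\gamma)+h_2 S(p\xi,p\xi,k\xi)+h_3 S(q\gamma,q\gamma,k\gamma)+h_4 S(p\xi,p\xi,k\gamma)+h_5 S(q\gamma,q\gamma,k\xi),$$ where $h_1,\dots,h_5$ are positive real constants with $2h_1+2h_2+2h_3+4h_4+4h_5<1$; (ii) $p(\mathcal{R})\cup q(\mathcal{R})\subset k(\mathcal{R})$; (iii) one of $p(\mathcal{R})$, $q(\mathcal{R})$ or $k(\mathcal{R})$ is a $V$-complete subspace of $\mathcal{R}$. Then the pairs $\{p,k\}$ and $\{q,k\}$ have a unique point of coincidence in $\mathcal{R}$. If moreover $\{p,k\}$ and $\{q,k\}$ are weakly compatible, then $p$, $q$ and $k$ have a unique common fixed point in $\mathcal{R}$.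
   Context: An ordered linear space is a real vector space $V$ with a partial order $\preceq$ such that $x\preceq y$ implies $x+z\preceq y+z$ and $\omega x\preceq \omega y$ for all $z\in V$, $\omega>0$. A linear lattice (Riesz space) is an ordered linear space in which every two-element set has a supremum and an infimum. Write $V^+=\{x\in V: x\succeq 0\}$; for a sequence $\langle\mu_n\rangle$ in $V$, $\mu_n\downarrow 0$ means $\mu_n$ is decreasing with infimum $0$. $V$ is Archimedean if $\frac1n x\downarrow 0$ for every $x\in V^+$. A vector $S$-metric on a nonempty set $\mathcal{R}$ is a map $S:\mathcal{R}\times\mathcal{R}\times\mathcal{R}\to V$ such that for all $x,y,z,a\in\mathcal{R}$: (a) $S(x,y,z)\succeq 0$; (b) $S(x,y,z)=0$ iff $x=y=z$; (c) $S(x,y,z)\preceq S(x,x,a)+S(y,y,a)+S(z,z,a)$. Then $(\mathcal{R},S,V)$ is a vector $S$-metric space. A sequence $\langle x_n\rangle$ in $\mathcal{R}$ $V$-converges to $x\in\mathcal{R}$ if there is a sequence $\mu_n\downarrow 0$ in $V$ with $S(x_n,x_n,x)\preceq \mu_n$ for all $n$; it is $V$-Cauchy if there is $\mu_n\downarrow0$ in $V$ with $S(x_n,x_n,x_{n+q})\preceq\mu_n$ for all $n,q$. The space (or a subset) is $V$-complete if every $V$-Cauchy sequence in it $V$-converges to a limit in it. For maps $f,g:\mathcal{R}\to\mathcal{R}$, a point $x$ with $fx=gx=y$ is a coincidence point and $y$ is a point of coincidence of $f$ and $g$; $f,g$ are weakly compatible if $fgx=gfx$ whenever $fx=gx$.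 A common fixed point of several maps is a point fixed by all of them. *)

theory Defs
  imports "HOL-Analysis.Analysis"
begin

text \<open>V is modelled as a type of class ordered_real_vector (ordered linear space) together
  with class lattice (every two-element set has sup and inf): a linear lattice.\<close>

definition decr_to_zero :: "(nat \<Rightarrow> 'v::ordered_real_vector) \<Rightarrow> bool" where
  "decr_to_zero \<mu> \<longleftrightarrow> (\<forall>n. \<mu> (Suc n) \<le> \<mu> n) \<and> (\<forall>n. 0 \<le> \<mu> n)
      \<and> (\<forall>b. (\<forall>n. b \<le> \<mu> n) \<longrightarrow> b \<le> 0)"

definition archimedean_V :: "'v::ordered_real_vector itself \<Rightarrow> bool" where
  "archimedean_V TYPE('v) \<longleftrightarrow>
     (\<forall>x::'v. 0 \<le> x \<longrightarrow> decr_to_zero (\<lambda>n. (1 / real (Suc n)) *\<^sub>R x))"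

definition vector_S_metric :: "('a \<Rightarrow> 'a \<Rightarrow> 'a \<Rightarrow> 'v::ordered_real_vector) \<Rightarrow> bool" where
  "vector_S_metric S \<longleftrightarrow>
     (\<forall>x y z. 0 \<le> S x y z) \<and>
     (\<forall>x y z. S x y z = 0 \<longleftrightarrow> x = y \<and> y = z) \<and>
     (\<forall>x y z a. S x y z \<le> S x x a + S y y a + S z z a)"

definition V_converges :: "('a \<Rightarrow> 'a \<Rightarrow> 'a \<Rightarrow> 'v::ordered_real_vector) \<Rightarrow> (nat \<Rightarrow> 'a) \<Rightarrow> 'a \<Rightarrow> bool" where
  "V_converges S x l \<longleftrightarrow> (\<exists>\<mu>. decr_to_zero \<mu> \<and> (\<forall>n. S (x n) (x n) l \<le> \<mu> n))"

definition V_Cauchy :: "('a \<Rightarrow> 'a \<Rightarrow> 'a \<Rightarrow> 'v::ordered_real_vector) \<Rightarrow> (nat \<Rightarrow> 'a) \<Rightarrow> bool" where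
  "V_Cauchy S x \<longleftrightarrow> (\<exists>\<mu>. decr_to_zero \<mu> \<and> (\<forall>n q. S (x n) (x n) (x (n + q)) \<le> \<mu> n))"

definition V_complete :: "('a \<Rightarrow> 'a \<Rightarrow> 'a \<Rightarrow> 'v::ordered_real_vector) \<Rightarrow> 'a set \<Rightarrow> bool" where
  "V_complete S A \<longleftrightarrow>
     (\<forall>x. (\<forall>n. x n \<in> A) \<longrightarrow> V_Cauchy S x \<longrightarrow> (\<exists>l\<in>A. V_converges S x l))"

definition point_of_coincidence :: "('a \<Rightarrow> 'a) \<Rightarrow> ('a \<Rightarrow> 'a) \<Rightarrow> 'a \<Rightarrow> bool" where
  "point_of_coincidence f g y \<longleftrightarrow> (\<exists>x. f x = y \<and> g x = y)"

definition weakly_compatible :: "('a \<Rightarrow> 'a) \<Rightarrow> ('a \<Rightarrow> 'a) \<Rightarrow> bool" where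
  "weakly_compatible f g \<longleftrightarrow> (\<forall>x. f x = g x \<longrightarrow> f (g x) = g (f x))"

end

theory Submission
  imports Defs
begin

text \<open>Since \<open>p(R) \<union> q(R) \<subseteq> k(R)\<close>, one can choose a sequence with \<open>k x(n+1) = p x(n)\<close> for even
  \<open>n\<close> and \<open>k x(n+1) = q x(n)\<close> for odd \<open>n\<close> (a Jungck sequence). The contraction condition and the
  triangle inequality of \<open>S\<close> make the distances between consecutive terms of \<open>y(n) = k x(n)\<close>
  shrink by the factor \<open>\<lambda> = (h1 + h2 + h3 + h4 + h5) / (1 - h2 - h3 - 2 h4 - 2 h5) < 1\<close>.
  As \<open>V\<close> is Archimedean, the vectors \<open>c \<lambda>\<^sup>n d\<close> decrease to \<open>0\<close>, so \<open>y\<close> is V-Cauchy; its odd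
  resp. even terms lie in \<open>p(R)\<close> resp. \<open>q(R)\<close>, so whichever of \<open>p(R)\<close>, \<open>q(R)\<close>, \<open>k(R)\<close> is complete
  provides a limit \<open>u = k v\<close>. Passing to the limit in the contraction condition gives
  \<open>p v = q v = u\<close>, and applied to two points of coincidence it shows that they are equal.
  Weak compatibility turns the unique point of coincidence into the unique common fixed point.\<close>

lemma decr_to_zero_antimono:
  assumes "decr_to_zero \<mu>" "n \<le> m"
  shows "\<mu> m \<le> \<mu> n"
  using assms(2)
proof (induction m rule: dec_induct)
  case (step m)
  then show ?case using assms(1) unfolding decr_to_zero_def by (meson order_trans)
qed simp

lemma decr_to_zero_lower_bound: "decr_to_zero \<mu> \<Longrightarrow> (\<And>n. b \<le> \<mu> n) \<Longrightarrow> b \<le> 0"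
  unfolding decr_to_zero_def by blast

lemma decr_to_zero_add:
  fixes \<mu> \<nu> :: "nat \<Rightarrow> 'v::ordered_real_vector"
  assumes \<mu>: "decr_to_zero \<mu>" and \<nu>: "decr_to_zero \<nu>"
  shows "decr_to_zero (\<lambda>n. \<mu> n + \<nu> n)"
  unfolding decr_to_zero_def
proof (intro conjI allI impI)
  fix n
  show "\<mu> (Suc n) + \<nu> (Suc n) \<le> \<mu> n + \<nu> n" "0 \<le> \<mu> n + \<nu> n"
    using \<mu> \<nu> unfolding decr_to_zero_def by (auto intro: add_mono)
next
  fix b assume b: "\<forall>n. b \<le> \<mu> n + \<nu> n"
  have "b \<le> \<mu> j" for j
  proof -
    have "b - \<mu> j \<le> \<nu> i" for i
    proof -
      have "b \<le> \<mu> (max i j) + \<nu> (max i j)" using b by blast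
      also have "\<dots> \<le> \<mu> j + \<nu> i"
        by (intro add_mono decr_to_zero_antimono[OF \<mu>] decr_to_zero_antimono[OF \<nu>]) auto
      finally show ?thesis by (simp add: algebra_simps)
    qed
    then have "b - \<mu> j \<le> 0" by (rule decr_to_zero_lower_bound[OF \<nu>])
    then show ?thesis by simp
  qed
  then show "b \<le> 0" by (rule decr_to_zero_lower_bound[OF \<mu>])
qed

lemma decr_to_zero_scaleR:
  fixes \<mu> :: "nat \<Rightarrow> 'v::ordered_real_vector"
  assumes c: "0 \<le> c" and \<mu>: "decr_to_zero \<mu>"
  shows "decr_to_zero (\<lambda>n. c *\<^sub>R \<mu> n)"
  unfolding decr_to_zero_def
proof (intro conjI allI impI)
  fix n
  show "c *\<^sub>R \<mu> (Suc n) \<le> c *\<^sub>R \<mu> n" "0 \<le> c *\<^sub>R \<mu> n"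
    using \<mu> c unfolding decr_to_zero_def by (simp_all add: scaleR_left_mono scaleR_nonneg_nonneg)
next
  fix b assume b: "\<forall>n. b \<le> c *\<^sub>R \<mu> n"
  show "b \<le> 0"
  proof (cases "c = 0")
    case True
    then show ?thesis using b by auto
  next
    case False
    with c have "c > 0" by simp
    then have "(1/c) *\<^sub>R b \<le> \<mu> n" for n
      using scaleR_left_mono[OF b[rule_format, of n], of "1/c"] by simp
    then have "(1/c) *\<^sub>R b \<le> 0" by (rule decr_to_zero_lower_bound[OF \<mu>])
    with \<open>c > 0\<close> show ?thesis by (simp add: scaleR_le_0_iff)
  qed
qed

lemma decr_to_zero_subseq:
  assumes \<mu>: "decr_to_zero \<mu>" and g: "strict_mono g"
  shows "decr_to_zero (\<mu> \<circ> g)"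
  unfolding decr_to_zero_def comp_def
proof (intro conjI allI impI)
  fix n
  show "\<mu> (g (Suc n)) \<le> \<mu> (g n)"
    by (rule decr_to_zero_antimono[OF \<mu>]) (simp add: g strict_mono_leD)
  show "0 \<le> \<mu> (g n)" using \<mu> unfolding decr_to_zero_def by blast
next
  fix b assume "\<forall>n. b \<le> \<mu> (g n)"
  then have "b \<le> \<mu> n" for n
    using decr_to_zero_antimono[OF \<mu> seq_suble[OF g]] by (meson order_trans)
  then show "b \<le> 0" by (rule decr_to_zero_lower_bound[OF \<mu>])
qed

lemma decr_to_zero_geometric:
  fixes d :: "'v::ordered_real_vector"
  assumes arch: "archimedean_V TYPE('v)"
    and c: "0 \<le> c" and r: "0 \<le> r" "r < 1" and d: "0 \<le> d"
  shows "decr_to_zero (\<lambda>n. (c * r^n) *\<^sub>R d)"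
  unfolding decr_to_zero_def
proof (intro conjI allI impI)
  fix n
  show "(c * r^Suc n) *\<^sub>R d \<le> (c * r^n) *\<^sub>R d"
    using c r d by (intro scaleR_right_mono mult_left_mono) (auto intro: mult_left_le_one_le)
  show "0 \<le> (c * r^n) *\<^sub>R d" using c r d by (simp add: scaleR_nonneg_nonneg)
next
  fix b assume b: "\<forall>n. b \<le> (c * r^n) *\<^sub>R d"
  have harmonic: "decr_to_zero (\<lambda>m. (1 / real (Suc m)) *\<^sub>R d)"
    using arch d unfolding archimedean_V_def by blast
  have "b \<le> (1 / real (Suc m)) *\<^sub>R d" for m
  proof -
    have "(\<lambda>n. c * r^n) \<longlonglongrightarrow> 0"
      using r by (intro tendsto_mult_right_zero LIMSEQ_power_zero) auto
    then have "\<forall>\<^sub>F n in sequentially. c * r^n < 1 / real (Suc m)"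
      by (rule order_tendstoD(2)) simp
    then obtain n where "c * r^n < 1 / real (Suc m)"
      by (auto simp: eventually_sequentially)
    with b d show ?thesis by (meson less_imp_le order_trans scaleR_right_mono)
  qed
  then show "b \<le> 0" by (rule decr_to_zero_lower_bound[OF harmonic])
qed

lemma geometric_sum_le:
  fixes r :: real
  assumes "0 \<le> r" "r < 1"
  shows "(\<Sum>i<q. r^(n + i)) \<le> r^n / (1 - r)"
proof -
  have "(\<Sum>i<q. r^(n + i)) = r^n * (\<Sum>i<q. r^i)"
    by (simp add: power_add sum_distrib_left)
  also have "\<dots> = r^n * ((1 - r^q) / (1 - r))"
    using assms by (simp add: sum_gp_strict)
  also have "\<dots> \<le> r^n * (1 / (1 - r))"
    using assms by (intro mult_left_mono divide_right_mono) auto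
  finally show ?thesis by simp
qed

lemma eq_0_if_le_scaleR_add_decr_to_zero:
  fixes W :: "'v::ordered_real_vector"
  assumes "0 \<le> W" "a < 1" "decr_to_zero E" "\<And>n. W \<le> a *\<^sub>R W + E n"
  shows "W = 0"
proof -
  have "(1 - a) *\<^sub>R W \<le> E n" for n
    using assms(4)[of n] by (simp add: algebra_simps)
  then have "(1 - a) *\<^sub>R W \<le> 0" by (rule decr_to_zero_lower_bound[OF assms(3)])
  with assms(1,2) show ?thesis by (simp add: scaleR_le_0_iff)
qed

lemma eq_0_if_le_scaleR_self:
  fixes W :: "'v::ordered_real_vector"
  assumes "0 \<le> W" "a < 1" "W \<le> a *\<^sub>R W"
  shows "W = 0"
  using eq_0_if_le_scaleR_add_decr_to_zero[OF assms(1,2), of "\<lambda>_. 0"] assms(3)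
  unfolding decr_to_zero_def by simp

lemma le_scaleR_if_le_scaleR_add_self:
  fixes D D' :: "'v::ordered_real_vector"
  assumes "0 \<le> D" "0 \<le> D'" "0 \<le> a" "a \<le> A" "A < 1" "b \<le> B"
    and "D' \<le> b *\<^sub>R D + a *\<^sub>R D'"
  shows "D' \<le> (B / (1 - A)) *\<^sub>R D"
proof -
  have "D' \<le> B *\<^sub>R D + A *\<^sub>R D'"
    using assms(7) add_mono[OF scaleR_right_mono[OF assms(6,1)] scaleR_right_mono[OF assms(4,2)]]
    by (rule order_trans)
  then have "(1 - A) *\<^sub>R D' \<le> B *\<^sub>R D" by (simp add: algebra_simps)
  then have "(1 / (1 - A)) *\<^sub>R ((1 - A) *\<^sub>R D') \<le> (1 / (1 - A)) *\<^sub>R (B *\<^sub>R D)"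
    using assms(5) by (intro scaleR_left_mono) auto
  with assms(5) show ?thesis by simp
qed

locale vector_S_metric_space =
  fixes S :: "'a \<Rightarrow> 'a \<Rightarrow> 'a \<Rightarrow> 'v::ordered_real_vector"
  assumes S_metric: "vector_S_metric S"
begin

lemma S_nonneg: "0 \<le> S x y z"
  using S_metric unfolding vector_S_metric_def by (elim conjE allE)

lemma S_eq_0_iff: "S x y z = 0 \<longleftrightarrow> x = y \<and> y = z"
  using S_metric unfolding vector_S_metric_def by (elim conjE allE)

lemma S_self [simp]: "S x x x = 0"
  by (simp add: S_eq_0_iff)

lemma S_le: "S x y z \<le> S x x a + S y y a + S z z a"
  using S_metric unfolding vector_S_metric_def by (elim conjE allE)

lemma S_sym: "S x x y = S y y x"
  using S_le[of x x y x] S_le[of y y x y] by (simp add: antisym)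

lemma S_triangle: "S x x z \<le> 2 *\<^sub>R S x x w + S w w z"
  using S_le[of x x z w] by (simp add: S_sym[of z w] scaleR_2)

lemma S_telescope:
  "S (y n) (y n) (y (n + q)) \<le> 2 *\<^sub>R (\<Sum>i<q. S (y (n + i)) (y (n + i)) (y (Suc (n + i))))"
proof (induction q arbitrary: n)
  case (Suc q)
  have "S (y n) (y n) (y (n + Suc q))
      \<le> 2 *\<^sub>R S (y n) (y n) (y (Suc n)) + S (y (Suc n)) (y (Suc n)) (y (Suc n + q))"
    using S_triangle[of "y n" "y (n + Suc q)" "y (Suc n)"] by simp
  also have "\<dots> \<le> 2 *\<^sub>R S (y n) (y n) (y (Suc n))
      + 2 *\<^sub>R (\<Sum>i<q. S (y (Suc n + i)) (y (Suc n + i)) (y (Suc (Suc n + i))))"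
    using Suc.IH[of "Suc n"] by (rule add_left_mono)
  also have "\<dots> = 2 *\<^sub>R (\<Sum>i<Suc q. S (y (n + i)) (y (n + i)) (y (Suc (n + i))))"
    unfolding sum.lessThan_Suc_shift by (simp add: scaleR_add_right)
  finally show ?case .
qed simp

lemma V_Cauchy_if_geometric_steps:
  assumes arch: "archimedean_V TYPE('v)" and lam: "0 \<le> lam" "lam < 1"
    and step: "\<And>n. S (y (Suc n)) (y (Suc n)) (y (Suc (Suc n))) \<le> lam *\<^sub>R S (y n) (y n) (y (Suc n))"
  shows "V_Cauchy S y"
proof -
  define D where "D n = S (y n) (y n) (y (Suc n))" for n
  have D_geometric: "D n \<le> lam^n *\<^sub>R D 0" for n
  proof (induction n)
    case (Suc n)
    have "D (Suc n) \<le> lam *\<^sub>R D n" using step unfolding D_def .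
    also have "\<dots> \<le> lam *\<^sub>R (lam^n *\<^sub>R D 0)" using Suc lam by (intro scaleR_left_mono) auto
    finally show ?case by simp
  qed simp
  have "S (y n) (y n) (y (n + q)) \<le> (2 / (1 - lam) * lam^n) *\<^sub>R D 0" for n q
  proof -
    have "S (y n) (y n) (y (n + q)) \<le> 2 *\<^sub>R (\<Sum>i<q. D (n + i))"
      using S_telescope unfolding D_def .
    also have "\<dots> \<le> 2 *\<^sub>R (\<Sum>i<q. lam^(n + i) *\<^sub>R D 0)"
      by (intro scaleR_left_mono sum_mono D_geometric) simp
    also have "\<dots> = 2 *\<^sub>R (\<Sum>i<q. lam^(n + i)) *\<^sub>R D 0"
      by (simp add: scaleR_sum_left)
    also have "\<dots> \<le> 2 *\<^sub>R (lam^n / (1 - lam)) *\<^sub>R D 0"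
      using geometric_sum_le[OF lam, of n q] by (intro scaleR_left_mono scaleR_right_mono) (auto simp: D_def S_nonneg)
    finally show ?thesis by simp
  qed
  moreover have "decr_to_zero (\<lambda>n. (2 / (1 - lam) * lam^n) *\<^sub>R D 0)"
    using lam by (intro decr_to_zero_geometric[OF arch]) (auto simp: D_def S_nonneg)
  ultimately show ?thesis unfolding V_Cauchy_def by blast
qed

lemma V_Cauchy_subseq:
  assumes "V_Cauchy S y" and g: "strict_mono g"
  shows "V_Cauchy S (y \<circ> g)"
proof -
  obtain \<mu> where \<mu>: "decr_to_zero \<mu>" "\<And>n q. S (y n) (y n) (y (n + q)) \<le> \<mu> n"
    using assms(1) unfolding V_Cauchy_def by blast
  have "S (y (g n)) (y (g n)) (y (g (n + q))) \<le> \<mu> (g n)" for n q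
    using \<mu>(2)[of "g n" "g (n + q) - g n"] strict_mono_leD[OF g, of n "n + q"] by simp
  with decr_to_zero_subseq[OF \<mu>(1) g] show ?thesis
    unfolding V_Cauchy_def comp_def by blast
qed

lemma V_converges_subseq:
  assumes "V_converges S y u" and g: "strict_mono g"
  shows "V_converges S (y \<circ> g) u"
proof -
  obtain \<nu> where "decr_to_zero \<nu>" "\<And>n. S (y n) (y n) u \<le> \<nu> n"
    using assms(1) unfolding V_converges_def by blast
  with decr_to_zero_subseq[OF _ g] show ?thesis
    unfolding V_converges_def comp_def by blast
qed

lemma V_converges_if_subseq_converges:
  assumes "V_Cauchy S y" and g: "strict_mono g" and "V_converges S (y \<circ> g) u"
  shows "V_converges S y u"
proof -
  obtain \<mu> where \<mu>: "decr_to_zero \<mu>" "\<And>n q. S (y n) (y n) (y (n + q)) \<le> \<mu> n"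
    using assms(1) unfolding V_Cauchy_def by blast
  obtain \<nu> where \<nu>: "decr_to_zero \<nu>" "\<And>n. S (y (g n)) (y (g n)) u \<le> \<nu> n"
    using assms(3) unfolding V_converges_def by auto
  have "S (y n) (y n) u \<le> 2 *\<^sub>R \<mu> n + \<nu> n" for n
  proof -
    have "S (y n) (y n) (y (g n)) \<le> \<mu> n"
      using \<mu>(2)[of n "g n - n"] seq_suble[OF g, of n] by simp
    then show ?thesis
      using S_triangle[of "y n" u "y (g n)"] add_mono[OF scaleR_left_mono \<nu>(2)[of n], of _ _ 2]
      by (meson order_trans zero_le_numeral)
  qed
  moreover have "decr_to_zero (\<lambda>n. 2 *\<^sub>R \<mu> n + \<nu> n)"
    by (intro decr_to_zero_add decr_to_zero_scaleR \<mu>(1) \<nu>(1)) simp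
  ultimately show ?thesis unfolding V_converges_def by blast
qed

lemma V_complete_subseq_converges:
  fixes g :: "nat \<Rightarrow> nat"
  assumes "V_complete S A" "V_Cauchy S y" "strict_mono g" "\<And>n. y (g n) \<in> A"
  shows "\<exists>u\<in>A. V_converges S y u"
proof -
  have "\<exists>u\<in>A. V_converges S (y \<circ> g) u"
    using assms(1,4) V_Cauchy_subseq[OF assms(2,3)] unfolding V_complete_def comp_def by simp
  then obtain u where "u \<in> A" "V_converges S (y \<circ> g) u" ..
  then show ?thesis using V_converges_if_subseq_converges[OF assms(2,3)] by blast
qed

end

definition contraction_ratio :: "real \<Rightarrow> real \<Rightarrow> real \<Rightarrow> real \<Rightarrow> real \<Rightarrow> real" where
  "contraction_ratio h1 h2 h3 h4 h5 = (h1 + h2 + h3 + h4 + h5) / (1 - (h2 + h3 + 2*h4 + 2*h5))"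

lemma contraction_ratio_swap: "contraction_ratio h1 h3 h2 h5 h4 = contraction_ratio h1 h2 h3 h4 h5"
  unfolding contraction_ratio_def by (simp add: ac_simps)

locale S_contraction = vector_S_metric_space S
  for S :: "'a \<Rightarrow> 'a \<Rightarrow> 'a \<Rightarrow> 'v::ordered_real_vector" +
  fixes p q k :: "'a \<Rightarrow> 'a" and h1 h2 h3 h4 h5 :: real
  assumes h_nonneg: "0 \<le> h1" "0 \<le> h2" "0 \<le> h3" "0 \<le> h4" "0 \<le> h5"
    and h_sum: "h1 + 2*h2 + 2*h3 + 3*h4 + 3*h5 < 1"
    and contraction: "\<And>\<xi> \<gamma>. S (p \<xi>) (p \<xi>) (q \<gamma>) \<le>
                 h1 *\<^sub>R S (k \<xi>) (k \<xi>) (k \<gamma>) + h2 *\<^sub>R S (p \<xi>) (p \<xi>) (k \<xi>)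
               + h3 *\<^sub>R S (q \<gamma>) (q \<gamma>) (k \<gamma>) + h4 *\<^sub>R S (p \<xi>) (p \<xi>) (k \<gamma>)
               + h5 *\<^sub>R S (q \<gamma>) (q \<gamma>) (k \<xi>)"
begin

text \<open>The hypotheses are invariant under exchanging \<open>p\<close> with \<open>q\<close>, \<open>h2\<close> with \<open>h3\<close> and \<open>h4\<close>
  with \<open>h5\<close>; every statement proved for \<open>p\<close> thus has a mirror image for \<open>q\<close>.\<close>

lemma swap: "S_contraction S q p k h1 h3 h2 h5 h4"
proof unfold_locales
  fix \<xi> \<gamma>
  show "S (q \<xi>) (q \<xi>) (p \<gamma>) \<le>
      h1 *\<^sub>R S (k \<xi>) (k \<xi>) (k \<gamma>) + h3 *\<^sub>R S (q \<xi>) (q \<xi>) (k \<xi>)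
    + h2 *\<^sub>R S (p \<gamma>) (p \<gamma>) (k \<gamma>) + h5 *\<^sub>R S (q \<xi>) (q \<xi>) (k \<gamma>)
    + h4 *\<^sub>R S (p \<gamma>) (p \<gamma>) (k \<xi>)"
    using contraction[of \<gamma> \<xi>]
    by (simp add: S_sym[of "q \<xi>" "p \<gamma>"] S_sym[of "k \<xi>" "k \<gamma>"] ac_simps)
qed (use S_metric h_nonneg h_sum in simp_all)

lemma contraction_ratio_bounds:
  "0 \<le> contraction_ratio h1 h2 h3 h4 h5" "contraction_ratio h1 h2 h3 h4 h5 < 1"
  using h_nonneg h_sum unfolding contraction_ratio_def by auto

lemma contraction_step:
  assumes "k \<gamma> = p \<xi>"
  shows "S (p \<xi>) (p \<xi>) (q \<gamma>) \<le> contraction_ratio h1 h2 h3 h4 h5 *\<^sub>R S (k \<xi>) (k \<xi>) (p \<xi>)"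
proof -
  define D where "D = S (k \<xi>) (k \<xi>) (p \<xi>)"
  define D' where "D' = S (p \<xi>) (p \<xi>) (q \<gamma>)"
  have "S (q \<gamma>) (q \<gamma>) (k \<xi>) \<le> 2 *\<^sub>R D' + D"
    using S_triangle[of "q \<gamma>" "k \<xi>" "p \<xi>"] unfolding D_def D'_def by (simp add: S_sym)
  moreover have "D' \<le> h1 *\<^sub>R D + h2 *\<^sub>R D + h3 *\<^sub>R D' + h5 *\<^sub>R S (q \<gamma>) (q \<gamma>) (k \<xi>)"
    using contraction[of \<xi> \<gamma>] unfolding assms D_def D'_def
    by (simp add: S_sym[of "p \<xi>" "k \<xi>"] S_sym[of "q \<gamma>" "p \<xi>"])
  ultimately have "D' \<le> h1 *\<^sub>R D + h2 *\<^sub>R D + h3 *\<^sub>R D' + h5 *\<^sub>R (2 *\<^sub>R D' + D)"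
    using h_nonneg(5) by (meson add_left_mono order_trans scaleR_left_mono)
  also have "\<dots> = (h1 + h2 + h5) *\<^sub>R D + (h3 + 2*h5) *\<^sub>R D'"
    by (simp add: algebra_simps)
  finally show ?thesis
    unfolding D_def D'_def contraction_ratio_def using h_nonneg h_sum
    by (intro le_scaleR_if_le_scaleR_add_self S_nonneg) auto
qed

lemma limit_coincidence:
  assumes "V_converges S (k \<circ> \<xi>) u" "V_converges S (p \<circ> \<xi>) u" "k v = u"
  shows "q v = u"
proof -
  obtain \<nu>\<^sub>k where \<nu>\<^sub>k: "decr_to_zero \<nu>\<^sub>k" "\<And>n. S (k (\<xi> n)) (k (\<xi> n)) u \<le> \<nu>\<^sub>k n"
    using assms(1) unfolding V_converges_def by auto
  obtain \<nu>\<^sub>p where \<nu>\<^sub>p: "decr_to_zero \<nu>\<^sub>p" "\<And>n. S (p (\<xi> n)) (p (\<xi> n)) u \<le> \<nu>\<^sub>p n"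
    using assms(2) unfolding V_converges_def by auto
  define W where "W = S (q v) (q v) u"
  have "W \<le> (h3 + 2*h5) *\<^sub>R W + ((h1 + h2 + h5) *\<^sub>R \<nu>\<^sub>k n + (2 + 2*h2 + h4) *\<^sub>R \<nu>\<^sub>p n)" for n
  proof -
    define a b where "a = k (\<xi> n)" and "b = p (\<xi> n)"
    have au: "S a a u \<le> \<nu>\<^sub>k n" and bu: "S b b u \<le> \<nu>\<^sub>p n"
      unfolding a_def b_def by (fact \<nu>\<^sub>k(2) \<nu>\<^sub>p(2))+
    have "S b b a \<le> 2 *\<^sub>R S b b u + S a a u"
      using S_triangle[of b a u] by (simp add: S_sym[of u a])
    also have "\<dots> \<le> 2 *\<^sub>R \<nu>\<^sub>p n + \<nu>\<^sub>k n"
      using au bu by (intro add_mono scaleR_left_mono) auto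
    finally have ba: "S b b a \<le> 2 *\<^sub>R \<nu>\<^sub>p n + \<nu>\<^sub>k n" .
    have qa: "S (q v) (q v) a \<le> 2 *\<^sub>R W + \<nu>\<^sub>k n"
      using S_triangle[of "q v" a u] add_left_mono[OF au] unfolding W_def S_sym[of u a]
      by (rule order_trans)
    have "S b b (q v) \<le> h1 *\<^sub>R S a a u + h2 *\<^sub>R S b b a + h3 *\<^sub>R W
        + h4 *\<^sub>R S b b u + h5 *\<^sub>R S (q v) (q v) a"
      using contraction[of "\<xi> n" v] unfolding assms(3) a_def b_def W_def by simp
    also have "\<dots> \<le> h1 *\<^sub>R \<nu>\<^sub>k n + h2 *\<^sub>R (2 *\<^sub>R \<nu>\<^sub>p n + \<nu>\<^sub>k n) + h3 *\<^sub>R W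
        + h4 *\<^sub>R \<nu>\<^sub>p n + h5 *\<^sub>R (2 *\<^sub>R W + \<nu>\<^sub>k n)"
      using h_nonneg au ba bu qa by (intro add_mono scaleR_left_mono order_refl)
    finally have bq: "S b b (q v) \<le> \<dots>" .
    have "W \<le> 2 *\<^sub>R S b b u + S b b (q v)"
      using S_triangle[of u "q v" b] unfolding W_def by (simp add: S_sym[of "q v" u] S_sym[of u b])
    also have "\<dots> \<le> 2 *\<^sub>R \<nu>\<^sub>p n + (h1 *\<^sub>R \<nu>\<^sub>k n + h2 *\<^sub>R (2 *\<^sub>R \<nu>\<^sub>p n + \<nu>\<^sub>k n) + h3 *\<^sub>R W
        + h4 *\<^sub>R \<nu>\<^sub>p n + h5 *\<^sub>R (2 *\<^sub>R W + \<nu>\<^sub>k n))"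
      using bu bq by (intro add_mono scaleR_left_mono) auto
    also have "\<dots> = (h3 + 2*h5) *\<^sub>R W + ((h1 + h2 + h5) *\<^sub>R \<nu>\<^sub>k n + (2 + 2*h2 + h4) *\<^sub>R \<nu>\<^sub>p n)"
      by (simp add: algebra_simps)
    finally show ?thesis .
  qed
  moreover have "decr_to_zero (\<lambda>n. (h1 + h2 + h5) *\<^sub>R \<nu>\<^sub>k n + (2 + 2*h2 + h4) *\<^sub>R \<nu>\<^sub>p n)"
    using h_nonneg by (intro decr_to_zero_add decr_to_zero_scaleR \<nu>\<^sub>k(1) \<nu>\<^sub>p(1)) auto
  ultimately have "W = 0"
    using h_nonneg h_sum by (intro eq_0_if_le_scaleR_add_decr_to_zero[of W "h3 + 2*h5"])
      (auto simp: W_def S_nonneg)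
  then show ?thesis unfolding W_def by (simp add: S_eq_0_iff)
qed

lemma coincidence_unique:
  assumes "p x = k x" "q v = k v"
  shows "p x = q v"
proof -
  define W where "W = S (p x) (p x) (q v)"
  have "W \<le> (h1 + h4 + h5) *\<^sub>R W"
    using contraction[of x v] unfolding assms[symmetric] W_def
    by (simp add: S_sym[of "q v" "p x"] scaleR_add_left)
  then have "W = 0"
    using h_nonneg h_sum by (intro eq_0_if_le_scaleR_self[of W "h1 + h4 + h5"]) (auto simp: W_def S_nonneg)
  then show ?thesis unfolding W_def by (simp add: S_eq_0_iff)
qed

end

definition jungck_sequence :: "('a \<Rightarrow> 'a) \<Rightarrow> ('a \<Rightarrow> 'a) \<Rightarrow> ('a \<Rightarrow> 'a) \<Rightarrow> (nat \<Rightarrow> 'a) \<Rightarrow> bool" where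
  "jungck_sequence p q k x \<longleftrightarrow> (\<forall>n. k (x (Suc n)) = (if even n then p (x n) else q (x n)))"

lemma jungck_sequence_exists:
  assumes "range p \<union> range q \<subseteq> range k"
  shows "\<exists>x. jungck_sequence p q k x"
proof -
  define step where "step n y = (SOME t. k t = (if even n then p y else q y))" for n :: nat and y
  have "k (step n y) = (if even n then p y else q y)" for n y
  proof -
    have "(if even n then p y else q y) \<in> range k" using assms by auto
    then obtain t where "k t = (if even n then p y else q y)" by auto
    then show ?thesis unfolding step_def by (rule someI)
  qed
  then have "jungck_sequence p q k (rec_nat undefined step)"
    unfolding jungck_sequence_def by simp
  then show ?thesis by blast
qed

lemma jungck_sequence_shift: "jungck_sequence p q k x \<Longrightarrow> jungck_sequence q p k (x \<circ> Suc)"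
  unfolding jungck_sequence_def by simp

context S_contraction
begin

lemma V_Cauchy_jungck_sequence:
  assumes arch: "archimedean_V TYPE('v)" and x: "jungck_sequence p q k x"
  shows "V_Cauchy S (k \<circ> x)"
proof (rule V_Cauchy_if_geometric_steps[OF arch contraction_ratio_bounds])
  fix n
  show "S ((k \<circ> x) (Suc n)) ((k \<circ> x) (Suc n)) ((k \<circ> x) (Suc (Suc n)))
      \<le> contraction_ratio h1 h2 h3 h4 h5 *\<^sub>R S ((k \<circ> x) n) ((k \<circ> x) n) ((k \<circ> x) (Suc n))"
  proof (cases "even n")
    case True
    with x have "k (x (Suc n)) = p (x n)" "k (x (Suc (Suc n))) = q (x (Suc n))"
      unfolding jungck_sequence_def by simp_all
    then show ?thesis using contraction_step[of "x (Suc n)" "x n"] by simp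
  next
    case False
    with x have "k (x (Suc n)) = q (x n)" "k (x (Suc (Suc n))) = p (x (Suc n))"
      unfolding jungck_sequence_def by simp_all
    then show ?thesis
      using S_contraction.contraction_step[OF swap, of "x (Suc n)" "x n"]
      by (simp add: contraction_ratio_swap)
  qed
qed

lemma jungck_sequence_limit_exists:
  assumes arch: "archimedean_V TYPE('v)" and x: "jungck_sequence p q k x"
    and range: "range p \<union> range q \<subseteq> range k"
    and complete: "V_complete S (range p) \<or> V_complete S (range q) \<or> V_complete S (range k)"
  shows "\<exists>u\<in>range k. V_converges S (k \<circ> x) u"
proof -
  note Cauchy = V_Cauchy_jungck_sequence[OF arch x]
  have odd_in_range: "(k \<circ> x) (2*n + 1) \<in> range p" and even_in_range: "(k \<circ> x) (2*n + 2) \<in> range q" for n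
    using x unfolding jungck_sequence_def by auto
  have mono: "strict_mono (\<lambda>n::nat. 2*n + 1)" "strict_mono (\<lambda>n::nat. 2*n + 2)"
    by (simp_all add: strict_mono_def)
  from complete consider "V_complete S (range p)" | "V_complete S (range q)" | "V_complete S (range k)"
    by blast
  then show ?thesis
  proof cases
    case 1
    then show ?thesis
      using V_complete_subseq_converges[OF 1 Cauchy mono(1) odd_in_range] range by blast
  next
    case 2
    then show ?thesis
      using V_complete_subseq_converges[OF 2 Cauchy mono(2) even_in_range] range by blast
  next
    case 3
    then show ?thesis
      using V_complete_subseq_converges[OF 3 Cauchy, of id] by (simp add: strict_mono_def)
  qed
qed

lemma jungck_limit_coincidence_right:
  assumes x: "jungck_sequence p q k x" and "V_converges S (k \<circ> x) u" "k v = u"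
  shows "q v = u"
proof (rule limit_coincidence[of "x \<circ> (\<lambda>n. 2*n)"])
  have "strict_mono (\<lambda>n::nat. 2*n)" "strict_mono (\<lambda>n::nat. 2*n + 1)"
    by (simp_all add: strict_mono_def)
  then have "V_converges S (k \<circ> x \<circ> (\<lambda>n. 2*n)) u" "V_converges S (k \<circ> x \<circ> (\<lambda>n. 2*n + 1)) u"
    using V_converges_subseq[OF assms(2)] by blast+
  moreover have "p \<circ> (x \<circ> (\<lambda>n. 2*n)) = k \<circ> x \<circ> (\<lambda>n. 2*n + 1)"
    using x unfolding jungck_sequence_def by auto
  ultimately show "V_converges S (k \<circ> (x \<circ> (\<lambda>n. 2*n))) u" "V_converges S (p \<circ> (x \<circ> (\<lambda>n. 2*n))) u"
    by (simp_all add: comp_assoc)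
qed (fact assms(3))

lemma jungck_limit_coincidence:
  assumes x: "jungck_sequence p q k x" and "V_converges S (k \<circ> x) u" "k v = u"
  shows "p v = u" "q v = u"
proof -
  have "V_converges S (k \<circ> (x \<circ> Suc)) u"
    using V_converges_subseq[OF assms(2), of Suc] by (simp add: strict_mono_Suc_iff comp_assoc)
  then show "p v = u"
    using S_contraction.jungck_limit_coincidence_right[OF swap jungck_sequence_shift[OF x]] assms(3)
    by blast
  show "q v = u" using jungck_limit_coincidence_right[OF assms] .
qed

end

lemma weakly_compatible_fixed_point:
  assumes "weakly_compatible f g" "point_of_coincidence f g w"
    and unique: "\<And>z. point_of_coincidence f g z \<Longrightarrow> z = w"
  shows "f w = w" "g w = w"
proof -
  obtain v where v: "f v = w" "g v = w"
    using assms(2) unfolding point_of_coincidence_def by blast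
  with assms(1) have "f w = g w"
    unfolding weakly_compatible_def by metis
  then have "point_of_coincidence f g (f w)"
    unfolding point_of_coincidence_def by metis
  then show "f w = w" using unique by blast
  with \<open>f w = g w\<close> show "g w = w" by simp
qed

theorem theorem3p1:
  fixes S :: "'a \<Rightarrow> 'a \<Rightarrow> 'a \<Rightarrow> 'v::{ordered_real_vector, lattice}"
    and p q k :: "'a \<Rightarrow> 'a"
    and h1 h2 h3 h4 h5 :: real
  assumes arch: "archimedean_V TYPE('v)"
    and Smet: "vector_S_metric S"
    and complete: "V_complete S UNIV"
    and hpos: "h1 > 0" "h2 > 0" "h3 > 0" "h4 > 0" "h5 > 0"
    and hsum: "2*h1 + 2*h2 + 2*h3 + 4*h4 + 4*h5 < 1"
    and contr: "\<And>\<xi> \<gamma>. S (p \<xi>) (p \<xi>) (q \<gamma>) \<le>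
                 h1 *\<^sub>R S (k \<xi>) (k \<xi>) (k \<gamma>) + h2 *\<^sub>R S (p \<xi>) (p \<xi>) (k \<xi>)
               + h3 *\<^sub>R S (q \<gamma>) (q \<gamma>) (k \<gamma>) + h4 *\<^sub>R S (p \<xi>) (p \<xi>) (k \<gamma>)
               + h5 *\<^sub>R S (q \<gamma>) (q \<gamma>) (k \<xi>)"
    and range_sub: "range p \<union> range q \<subseteq> range k"
    and sub_complete: "V_complete S (range p) \<or> V_complete S (range q) \<or> V_complete S (range k)"
  shows "(\<exists>y. point_of_coincidence p k y \<and> point_of_coincidence q k y \<and>
             (\<forall>z. point_of_coincidence p k z \<or> point_of_coincidence q k z \<longrightarrow> z = y))
         \<and> (weakly_compatible p k \<and> weakly_compatible q k \<longrightarrow>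
             (\<exists>!x. p x = x \<and> q x = x \<and> k x = x))"
proof -
  interpret S_contraction S p q k h1 h2 h3 h4 h5
    by unfold_locales (use Smet hpos hsum contr in auto)
  obtain x where x: "jungck_sequence p q k x"
    using jungck_sequence_exists[OF range_sub] by blast
  obtain v where v: "V_converges S (k \<circ> x) (k v)"
    using jungck_sequence_limit_exists[OF arch x range_sub sub_complete] by blast
  define u where "u = k v"
  have pv: "p v = u" and qv: "q v = u"
    using jungck_limit_coincidence[OF x v] unfolding u_def by simp_all
  then have poc: "point_of_coincidence p k u" "point_of_coincidence q k u"
    unfolding point_of_coincidence_def u_def by blast+
  have unique: "z = u" if "point_of_coincidence p k z \<or> point_of_coincidence q k z" for z
    using that coincidence_unique[of _ v] S_contraction.coincidence_unique[OF swap, of _ v] pv qv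
    unfolding point_of_coincidence_def u_def by metis
  have "\<exists>!x. p x = x \<and> q x = x \<and> k x = x"
    if "weakly_compatible p k" "weakly_compatible q k"
  proof
    show "p u = u \<and> q u = u \<and> k u = u"
      using weakly_compatible_fixed_point[OF that(1) poc(1)] weakly_compatible_fixed_point[OF that(2) poc(2)]
        unique by blast
    show "y = u" if "p y = y \<and> q y = y \<and> k y = y" for y
      using that unique unfolding point_of_coincidence_def by metis
  qed
  with poc unique show ?thesis by blast
qed

end
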